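(* For all integers $n,k\ge 0$ and every $x$ with $|x|<1$, \[ \sum_{d=k+1}^\infty d^n x^d = \sum_{i=0}^n \frac{e_{n,i}^k\, x^{k+i+1}}{(1-x)^{n+1}}. \]
   Context: For a fixed integer parameter $k$, the numbers $e^k_{n,i}$ are defined by $e^k_{0,0}=1$, $e^k_{n,i}=0$ whenever $i<0$ or $i>n$, and $e^k_{n,i}=(k+i+1)\,e^k_{n-1,i}+(n-k-i)\,e^k_{n-1,i-1}$ for all other integers $n,i$. *)

theory Defs
  imports Complex_Main
begin

fun ecoef :: "int \<Rightarrow> nat \<Rightarrow> int \<Rightarrow> int" where
  "ecoef k 0 i = (if i = 0 then 1 else 0)"
| "ecoef k (Suc n) i =
     (if i < 0 \<or> i > int (Suc n) then 0
      else (k + i + 1) * ecoef k n i + (int (Suc n) - k - i) * ecoef k n (i - 1))"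

end

theory Submission
  imports Defs
begin

text \<open>Let S(n) be the power series sum of d^n x^d over d > k. Termwise differentiation gives
  S(n+1) = x S(n)', and S(0) is the geometric tail x^(k+1) / (1 - x). If S(n) = P(n) / (1 - x)^(n+1),
  the quotient rule gives x S(n)' = (x (1 - x) P(n)' + (n + 1) x P(n)) / (1 - x)^(n+2), and for the
  numerator P(n) = sum of e(n,i) x^(k+i+1) the identity P(n+1) = x (1 - x) P(n)' + (n + 1) x P(n)
  is, coefficientwise, the recurrence defining e(n,i).\<close>

lemma ecoef_eq_0_if_neg: "i < 0 \<Longrightarrow> ecoef k n i = 0"
  by (cases n) auto

lemma ecoef_eq_0_if_gt: "int n < i \<Longrightarrow> ecoef k n i = 0"
  by (induction n arbitrary: i) auto

lemma of_int_ecoef_Suc: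
  assumes "i \<le> Suc n"
  shows "real_of_int (ecoef (int k) (Suc n) (int i)) =
    real (k + i + 1) * ecoef (int k) n (int i)
    + (if i = 0 then 0 else (real n + 1 - real k - real i) * ecoef (int k) n (int (i - 1)))"
  using assms by (cases "i = 0") (auto simp: ecoef_eq_0_if_neg algebra_simps)

definition euler_numerator :: "nat \<Rightarrow> nat \<Rightarrow> real \<Rightarrow> real" where
  "euler_numerator k n x = (\<Sum>i = 0..n. of_int (ecoef (int k) n (int i)) * x ^ (k + i + 1))"

definition euler_numerator_deriv :: "nat \<Rightarrow> nat \<Rightarrow> real \<Rightarrow> real" where
  "euler_numerator_deriv k n x =
     (\<Sum>i = 0..n. of_int (ecoef (int k) n (int i)) * real (k + i + 1) * x ^ (k + i))"

lemma has_real_derivative_euler_numerator: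
  "(euler_numerator k n has_real_derivative euler_numerator_deriv k n x) (at x)"
  unfolding euler_numerator_def [abs_def] euler_numerator_deriv_def
proof (rule DERIV_sum)
  fix i
  show "((\<lambda>x. of_int (ecoef (int k) n (int i)) * x ^ (k + i + 1)) has_real_derivative
      of_int (ecoef (int k) n (int i)) * real (k + i + 1) * x ^ (k + i)) (at x)"
    using DERIV_cmult[OF DERIV_pow[of "k + i + 1" x UNIV], of "of_int (ecoef (int k) n (int i))"]
    by (simp add: mult_ac)
qed

lemma euler_numerator_Suc:
  "euler_numerator k (Suc n) x =
     x * (1 - x) * euler_numerator_deriv k n x + real (Suc n) * x * euler_numerator k n x"
proof -
  let ?e = "\<lambda>i. real_of_int (ecoef (int k) n (int i))"
  have "euler_numerator k (Suc n) x =
      (\<Sum>i = 0..Suc n. real (k + i + 1) * ?e i * x ^ (k + i + 1))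
    + (\<Sum>i = 0..Suc n. (if i = 0 then 0 else (real n + 1 - real k - real i) * ?e (i - 1)) * x ^ (k + i + 1))"
    unfolding euler_numerator_def
    by (simp add: of_int_ecoef_Suc sum.distrib algebra_simps del: ecoef.simps)
  also have "(\<Sum>i = 0..Suc n. real (k + i + 1) * ?e i * x ^ (k + i + 1))
      = (\<Sum>i = 0..n. real (k + i + 1) * ?e i * x ^ (k + i + 1))"
    by (simp add: ecoef_eq_0_if_gt)
  also have "(\<Sum>i = 0..Suc n. (if i = 0 then 0 else (real n + 1 - real k - real i) * ?e (i - 1)) * x ^ (k + i + 1))
      = (\<Sum>i = 0..n. (real n - real k - real i) * ?e i * x ^ (k + i + 2))"
    by (subst sum.atLeast0_atMost_Suc_shift) (simp add: algebra_simps)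
  finally show ?thesis
    unfolding euler_numerator_def euler_numerator_deriv_def
    by (simp add: sum_distrib_left sum.distrib[symmetric] sum_subtractf[symmetric] algebra_simps power_add)
qed

lemma geometric_tail_sums:
  fixes x :: "'a::real_normed_field"
  assumes "norm x < 1"
  shows "(\<lambda>d. if m \<le> d then x ^ d else 0) sums (x ^ m / (1 - x))"
proof -
  have "(\<lambda>d. x ^ m * x ^ d) sums (x ^ m * (1 / (1 - x)))"
    using geometric_sums[OF assms] by (intro sums_mult) simp
  then have "(\<lambda>d. if m \<le> d + m then x ^ (d + m) else 0) sums (x ^ m / (1 - x))"
    by (simp add: power_add mult_ac)
  then show ?thesis
    by (subst (asm) sums_zero_iff_shift) auto
qed

lemma sums_index_times_power_series:
  fixes c :: "nat \<Rightarrow> 'a::{real_normed_field,banach}"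
  assumes sums: "\<And>z. norm z < r \<Longrightarrow> (\<lambda>d. c d * z ^ d) sums f z" and x: "norm x < r"
  obtains D where "(f has_field_derivative D) (at x)"
    and "(\<lambda>d. of_nat d * c d * x ^ d) sums (x * D)"
proof
  have summable: "summable (\<lambda>d. c d * z ^ d)" if "norm z < r" for z
    using sums[OF that] by (rule sums_summable)
  have "((\<lambda>z. \<Sum>d. c d * z ^ d) has_field_derivative (\<Sum>d. diffs c d * x ^ d)) (at x)"
    using summable x by (rule termdiffs_strong')
  then show "(f has_field_derivative (\<Sum>d. diffs c d * x ^ d)) (at x)"
    by (rule has_field_derivative_transform_within_open[where S = "{z. norm z < r}"])
       (use x sums open_ball[of "0::'a" r] dist_0_norm in \<open>auto simp: sums_iff\<close>)
  have "(\<lambda>d. x * (diffs c d * x ^ d)) sums (x * (\<Sum>d. diffs c d * x ^ d))"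
    using termdiff_converges[OF x summable] by (intro sums_mult summable_sums)
  then have "(\<lambda>d. of_nat (Suc d) * c (Suc d) * x ^ Suc d) sums (x * (\<Sum>d. diffs c d * x ^ d))"
    by (simp add: diffs_def mult_ac)
  then have "(\<lambda>d. of_nat d * c d * x ^ d) sums (x * (\<Sum>d. diffs c d * x ^ d) + of_nat 0 * c 0 * x ^ 0)"
    by (subst (asm) sums_Suc_iff)
  then show "(\<lambda>d. of_nat d * c d * x ^ d) sums (x * (\<Sum>d. diffs c d * x ^ d))"
    by simp
qed

definition power_tail_formula :: "nat \<Rightarrow> nat \<Rightarrow> real \<Rightarrow> real" where
  "power_tail_formula k n x = euler_numerator k n x / (1 - x) ^ (n + 1)"

lemma power_tail_formula_Suc:
  assumes "x \<noteq> 1" and D: "(power_tail_formula k n has_real_derivative D) (at x)"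
  shows "x * D = power_tail_formula k (Suc n) x"
proof -
  define P where "P = euler_numerator k n x"
  define P' where "P' = euler_numerator_deriv k n x"
  have "(power_tail_formula k n has_real_derivative
      (P' * (1 - x) ^ (n + 1) - P * (real (n + 1) * (- 1 * (1 - x) ^ n))) / ((1 - x) ^ (n + 1) * (1 - x) ^ (n + 1))) (at x)"
    unfolding power_tail_formula_def [abs_def] P_def P'_def using assms(1)
    by (intro DERIV_divide has_real_derivative_euler_numerator DERIV_power derivative_eq_intros refl) auto
  then have "D = (P' * (1 - x) ^ (n + 1) + P * real (n + 1) * (1 - x) ^ n) / ((1 - x) ^ (n + 1) * (1 - x) ^ (n + 1))"
    using D DERIV_unique by fastforce
  also have "\<dots> = ((1 - x) ^ n * (P' * (1 - x) + real (n + 1) * P)) / ((1 - x) ^ n * (1 - x) ^ (n + 2))"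
    by (simp add: algebra_simps flip: power_add)
  also have "\<dots> = (P' * (1 - x) + real (n + 1) * P) / (1 - x) ^ (n + 2)"
    using assms(1) by simp
  finally show ?thesis
    unfolding power_tail_formula_def euler_numerator_Suc P_def P'_def
    using assms(1) by (simp add: field_simps)
qed

lemma power_tail_sums:
  assumes "\<bar>x\<bar> < 1"
  shows "(\<lambda>d. if k + 1 \<le> d then real d ^ n * x ^ d else 0) sums power_tail_formula k n x"
  using assms
proof (induction n arbitrary: x)
  case 0
  have "power_tail_formula k 0 x = x ^ (k + 1) / (1 - x)"
    by (simp add: power_tail_formula_def euler_numerator_def)
  with geometric_tail_sums[of x "k + 1"] 0 show ?case
    by (simp cong: if_cong)
next
  case (Suc n)
  let ?c = "\<lambda>d. if k + 1 \<le> d then real d ^ n else 0"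
  have coeff: "?c d * z ^ d = (if k + 1 \<le> d then real d ^ n * z ^ d else 0)" for d z
    by simp
  have sums_c: "(\<lambda>d. ?c d * z ^ d) sums power_tail_formula k n z" if "norm z < 1" for z
    using Suc.IH that unfolding coeff by simp
  then obtain D where D: "(power_tail_formula k n has_real_derivative D) (at x)"
    and sums: "(\<lambda>d. real d * ?c d * x ^ d) sums (x * D)"
    using sums_index_times_power_series[of 1 ?c _ x, OF sums_c] Suc.prems by auto
  have "x * D = power_tail_formula k (Suc n) x"
    using Suc.prems D by (intro power_tail_formula_Suc) auto
  moreover have "real d * ?c d * x ^ d = (if k + 1 \<le> d then real d ^ Suc n * x ^ d else 0)" for d
    by simp
  ultimately show ?case
    using sums by simp
qed

theorem corollary2p2:
  fixes n k :: nat and x :: real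
  assumes "\<bar>x\<bar> < 1"
  shows "(\<lambda>d. if k + 1 \<le> d then real d ^ n * x ^ d else 0) sums
           (\<Sum>i = 0..n. real_of_int (ecoef (int k) n (int i)) * x ^ (k + i + 1) / (1 - x) ^ (n + 1))"
  using power_tail_sums[OF assms, of k n]
  by (simp add: power_tail_formula_def euler_numerator_def sum_divide_distrib)

end
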